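(* Let $\rho\in\mathbb R$, let $\mathbf a=(a_{m,n})$ be a complex matrix and let $\kappa_{\mathbf a}:\mathbb H_\rho\times\mathbb H_\rho\to\mathbb C$ be the Dirichlet series kernel with coefficient matrix $\mathbf a$. If $\kappa_{\mathbf a}$ is non-constant, then $\kappa_{\mathbf a}$ is not $\mathrm{Aut}_L(\mathbb H_\rho)$-invariant.
   Context: $\mathbb H_\rho=\{\Re s>\rho\}$. $\kappa_{\mathbf a}(s,u)=\sum_{m,n\ge1}a_{m,n}m^{-s}n^{-\bar u}$ is a Dirichlet series kernel on $\mathbb H_\rho$ if $(s,u)\mapsto\kappa_{\mathbf a}(s,\bar u)$ is regularly convergent on $\mathbb H_\rho\times\mathbb H_\rho$ (regular convergence of $\sum c_{m,n}m^{-s}n^{-u}$ at $(s_0,u_0)$: the double series converges there and all row series $\sum_m c_{m,n}m^{-s_0}$ and column series $\sum_n c_{m,n}n^{-u_0}$ converge). For $A=\begin{pmatrix}a&b\\0&d\end{pmatrix}\in\mathrm{SL}_2(\mathbb R)$ let $\phi_A(s)=\frac{a(s-\rho)-ib}{d}+\rho$; $\mathrm{Aut}_L(\mathbb H_\rho)$ is the group of all such $\phi_A$. For a group $G$ acting on a domain $\Omega$, a positive semi-definite kernel $\kappa$ on $\Omega$ is called $G$-invariant if $\kappa(g\cdot s,g\cdot u)=\kappa(s,u)$ for all $s,u\in\Omega$, $g\in G$. *)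

theory Defs
  imports "HOL-Analysis.Analysis"
begin

definition halfplane :: "real \<Rightarrow> complex set" where
  "halfplane \<rho> = {s. Re s > \<rho>}"

definition npow :: "nat \<Rightarrow> complex \<Rightarrow> complex" where
  "npow n s = (of_nat n :: complex) powr (- s)"

definition dd_partial :: "(nat \<Rightarrow> nat \<Rightarrow> complex) \<Rightarrow> complex \<Rightarrow> complex \<Rightarrow> nat \<times> nat \<Rightarrow> complex" where
  "dd_partial c s u = (\<lambda>(M, N). \<Sum>m\<in>{1..M}. \<Sum>n\<in>{1..N}. c m n * npow m s * npow n u)"

text \<open>Regular convergence at (s0,u0): the double series converges (Pringsheim sense),
  and every row series and every column series converges.\<close>
definition regularly_convergent_at ::
  "(nat \<Rightarrow> nat \<Rightarrow> complex) \<Rightarrow> complex \<Rightarrow> complex \<Rightarrow> bool" where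
  "regularly_convergent_at c s0 u0 \<longleftrightarrow>
     (\<exists>L. (dd_partial c s0 u0 \<longlongrightarrow> L) (sequentially \<times>\<^sub>F sequentially)) \<and>
     (\<forall>n\<ge>1. summable (\<lambda>m. c (Suc m) n * npow (Suc m) s0)) \<and>
     (\<forall>m\<ge>1. summable (\<lambda>n. c m (Suc n) * npow (Suc n) u0))"

text \<open>kappa_a is a Dirichlet series kernel on H_rho: (s,u) |-> kappa_a(s, conj u) is
  regularly convergent on H_rho x H_rho.\<close>
definition dirichlet_series_kernel :: "real \<Rightarrow> (nat \<Rightarrow> nat \<Rightarrow> complex) \<Rightarrow> bool" where
  "dirichlet_series_kernel \<rho> a \<longleftrightarrow>
     (\<forall>s\<in>halfplane \<rho>. \<forall>u\<in>halfplane \<rho>. regularly_convergent_at a s u)"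

definition kappa :: "(nat \<Rightarrow> nat \<Rightarrow> complex) \<Rightarrow> complex \<Rightarrow> complex \<Rightarrow> complex" where
  "kappa a s u = Lim (sequentially \<times>\<^sub>F sequentially) (dd_partial a s (cnj u))"

text \<open>phi_A for A = (a b; 0 d) in SL_2(R).\<close>
definition phiA :: "real \<Rightarrow> real \<Rightarrow> real \<Rightarrow> real \<Rightarrow> complex \<Rightarrow> complex" where
  "phiA \<rho> a b d s = (of_real a * (s - of_real \<rho>) - \<i> * of_real b) / of_real d + of_real \<rho>"

definition Aut_L :: "real \<Rightarrow> (complex \<Rightarrow> complex) set" where
  "Aut_L \<rho> = {phiA \<rho> a b d | a b d. a * d = 1}"

definition psd_kernel :: "'a set \<Rightarrow> ('a \<Rightarrow> 'a \<Rightarrow> complex) \<Rightarrow> bool" where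
  "psd_kernel \<Omega> k \<longleftrightarrow>
     (\<forall>(n::nat) (x::nat \<Rightarrow> 'a) (c::nat \<Rightarrow> complex). (\<forall>i<n. x i \<in> \<Omega>) \<longrightarrow>
        (let S = (\<Sum>i<n. \<Sum>j<n. cnj (c i) * c j * k (x i) (x j)) in Im S = 0 \<and> Re S \<ge> 0))"

definition invariant_kernel :: "('a \<Rightarrow> 'a) set \<Rightarrow> 'a set \<Rightarrow> ('a \<Rightarrow> 'a \<Rightarrow> complex) \<Rightarrow> bool" where
  "invariant_kernel G \<Omega> k \<longleftrightarrow> psd_kernel \<Omega> k \<and>
     (\<forall>g\<in>G. \<forall>s\<in>\<Omega>. \<forall>u\<in>\<Omega>. k (g s) (g u) = k s u)"

end

theory Submission
  imports Defs "HOL-Real_Asymp.Real_Asymp"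
begin

(* The dilations s |-> rho + t^2 (s - rho) lie in Aut_L(H_rho) and push both arguments of the
   kernel to Re = infinity as t -> infinity. Regular convergence at the single point
   (rho + 1, rho + 1) already bounds the terms a_{m,n} m^(-rho-1) n^(-rho-1): finitely many rows
   and columns are bounded because their series converge, the rest because the rectangular
   partial sums converge. Comparing with the sums of m^(-x) n^(-y) then gives
   kappa_a(s, u) -> a_{1,1} as Re s, Re u -> infinity, so an invariant kernel is constant. *)

lemma norm_npow: "norm (npow m s) = real m powr (- Re s)"
  by (simp add: npow_def norm_powr_real_powr)

lemma tendsto_prod_sequentially_shift:
  assumes "(S \<longlongrightarrow> L) (sequentially \<times>\<^sub>F sequentially)"
  shows "((\<lambda>p. S (fst p + i, snd p + j)) \<longlongrightarrow> L) (sequentially \<times>\<^sub>F sequentially)"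
  using assms unfolding tendsto_def eventually_prod_sequentially
  by (metis fst_conv snd_conv trans_le_add1)

lemma dd_partial_term_eq_second_difference:
  "c (Suc M) (Suc N) * npow (Suc M) s * npow (Suc N) u =
     dd_partial c s u (Suc M, Suc N) - dd_partial c s u (M, Suc N)
       - dd_partial c s u (Suc M, N) + dd_partial c s u (M, N)"
  by (simp add: dd_partial_def sum.distrib algebra_simps)

lemma dd_partial_term_tendsto_zero:
  assumes "(dd_partial c s u \<longlongrightarrow> L) (sequentially \<times>\<^sub>F sequentially)"
  shows "((\<lambda>p. c (Suc (fst p)) (Suc (snd p)) * npow (Suc (fst p)) s * npow (Suc (snd p)) u)
           \<longlongrightarrow> 0) (sequentially \<times>\<^sub>F sequentially)"
proof -
  let ?S = "dd_partial c s u"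
  have "((\<lambda>p. ?S (fst p + 1, snd p + 1) - ?S (fst p + 0, snd p + 1)
            - ?S (fst p + 1, snd p + 0) + ?S (fst p + 0, snd p + 0))
          \<longlongrightarrow> L - L - L + L) (sequentially \<times>\<^sub>F sequentially)"
    by (intro tendsto_intros tendsto_prod_sequentially_shift assms)
  then show ?thesis
    by (simp add: dd_partial_term_eq_second_difference)
qed

lemma Bseq_imp_bdd_above_norm: "Bseq X \<Longrightarrow> bdd_above (range (\<lambda>n. norm (X n)))"
  unfolding Bseq_def by (auto intro: bdd_aboveI2)

lemma bounded_double_sequence:
  fixes f :: "nat \<Rightarrow> nat \<Rightarrow> 'a::real_normed_vector"
  assumes rows: "\<And>m. Bseq (f m)" and cols: "\<And>n. Bseq (\<lambda>m. f m n)"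
    and lim: "((\<lambda>p. f (fst p) (snd p)) \<longlongrightarrow> 0) (sequentially \<times>\<^sub>F sequentially)"
  shows "\<exists>B. \<forall>m n. norm (f m n) \<le> B"
proof -
  have "eventually (\<lambda>p. norm (f (fst p) (snd p)) < 1) (sequentially \<times>\<^sub>F sequentially)"
    using tendstoD[OF lim, of 1] by simp
  then obtain K where K: "\<And>m n. m \<ge> K \<Longrightarrow> n \<ge> K \<Longrightarrow> norm (f m n) < 1"
    unfolding eventually_prod_sequentially by auto
  define R where "R = (\<Union>m<K. range (\<lambda>n. norm (f m n))) \<union> (\<Union>n<K. range (\<lambda>m. norm (f m n))) \<union> {..1}"
  have "bdd_above R"
    using rows cols by (simp add: R_def Bseq_imp_bdd_above_norm)
  moreover have "norm (f m n) \<in> R" for m n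
    using K[of m n] unfolding R_def by (cases "m < K"; cases "n < K") auto
  then have "range (\<lambda>(m, n). norm (f m n)) \<subseteq> R"
    by auto
  ultimately have "bdd_above (range (\<lambda>(m, n). norm (f m n)))"
    by (rule bdd_above_mono)
  then show ?thesis
    unfolding bdd_above_def by auto
qed

lemma regularly_convergent_at_bounded_terms:
  assumes "regularly_convergent_at c s0 u0"
  shows "\<exists>B. \<forall>m\<ge>1. \<forall>n\<ge>1. norm (c m n * npow m s0 * npow n u0) \<le> B"
proof -
  define f where "f = (\<lambda>m n. c (Suc m) (Suc n) * npow (Suc m) s0 * npow (Suc n) u0)"
  from assms obtain L where L: "(dd_partial c s0 u0 \<longlongrightarrow> L) (sequentially \<times>\<^sub>F sequentially)"
    and cols: "\<forall>n\<ge>1. summable (\<lambda>m. c (Suc m) n * npow (Suc m) s0)"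
    and rows: "\<forall>m\<ge>1. summable (\<lambda>n. c m (Suc n) * npow (Suc n) u0)"
    unfolding regularly_convergent_at_def by blast
  have "Bseq (f m)" for m
    using summable_imp_Bseq[OF summable_mult[OF rows[rule_format, of "Suc m"], of "npow (Suc m) s0"]]
    by (simp add: f_def mult_ac)
  moreover have "Bseq (\<lambda>m. f m n)" for n
    using summable_imp_Bseq[OF summable_mult2[OF cols[rule_format, of "Suc n"], of "npow (Suc n) u0"]]
    by (simp add: f_def mult_ac)
  moreover have "((\<lambda>p. f (fst p) (snd p)) \<longlongrightarrow> 0) (sequentially \<times>\<^sub>F sequentially)"
    unfolding f_def by (rule dd_partial_term_tendsto_zero[OF L])
  ultimately obtain B where B: "\<And>m n. norm (f m n) \<le> B"
    using bounded_double_sequence by blast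
  have "norm (c m n * npow m s0 * npow n u0) \<le> B" if "m \<ge> 1" "n \<ge> 1" for m n
    using B[of "m - 1" "n - 1"] that by (simp add: f_def)
  then show ?thesis
    by blast
qed

lemma sum_real_powr_neg_le:
  fixes x :: real
  assumes x: "x \<ge> 2"
  shows "(\<Sum>m\<in>{1..M}. real m powr (- x)) \<le> 1 + 2 powr (2 - x)"
proof (cases "M \<ge> 1")
  case True
  have "(\<Sum>m\<in>{1..M}. real m powr (- x)) \<le> 1 + 2 powr (2 - x) * (1 - 1 / real M)"
    using True
  proof (induction M rule: dec_induct)
    case base
    then show ?case by simp
  next
    case (step M)
    have M: "real M \<ge> 1" using step by simp
    have "real (Suc M) powr (- x) = real (Suc M) powr (2 - x) * real (Suc M) powr (- 2)"
      by (simp add: powr_add[symmetric])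
    also have "\<dots> \<le> 2 powr (2 - x) * real (Suc M) powr (- 2)"
      using x step by (intro mult_right_mono powr_mono2') auto
    also have "real (Suc M) powr (- 2) = 1 / (real M + 1)\<^sup>2"
      by (simp add: powr_minus powr_realpow divide_inverse)
    also have "1 / (real M + 1)\<^sup>2 \<le> 1 / (real M * (real M + 1))"
      using M by (intro divide_left_mono) (auto simp: power2_eq_square intro!: mult_right_mono)
    also have "\<dots> = 1 / real M - 1 / (real M + 1)"
      using M by (simp add: field_simps)
    finally have "real (Suc M) powr (- x) \<le> 2 powr (2 - x) * (1 / real M - 1 / (real M + 1))"
      by (simp add: mult_left_mono)
    then show ?case
      using step by (simp add: algebra_simps)
  qed
  also have "\<dots> \<le> 1 + 2 powr (2 - x)"
    using True by (simp add: mult_left_le)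
  finally show ?thesis .
qed auto

lemma norm_dd_partial_minus_leading_le:
  assumes bound: "\<And>m n. m \<ge> 1 \<Longrightarrow> n \<ge> 1 \<Longrightarrow> norm (c m n * npow m s0 * npow n u0) \<le> B"
    and x: "Re s - Re s0 \<ge> 2" and y: "Re u - Re u0 \<ge> 2"
    and M: "M \<ge> 1" and N: "N \<ge> 1"
  shows "norm (dd_partial c s u (M, N) - c 1 1)
           \<le> B * ((1 + 2 powr (2 - (Re s - Re s0))) * (1 + 2 powr (2 - (Re u - Re u0))) - 1)"
proof -
  define x where "x = Re s - Re s0"
  define y where "y = Re u - Re u0"
  define f where "f = (\<lambda>(m, n). c m n * npow m s * npow n u)"
  define w where "w = (\<lambda>(m::nat, n::nat). real m powr (- x) * real n powr (- y))"
  let ?P = "{1..M} \<times> {1..N}"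
  have B: "B \<ge> 0"
    using bound[of 1 1] by (meson norm_ge_zero order_trans order_refl)
  have f_le: "norm (f p) \<le> B * w p" if pP: "p \<in> ?P" for p
  proof -
    obtain m n where p: "p = (m, n)" "m \<ge> 1" "n \<ge> 1"
      using pP by (cases p) auto
    have "real m powr (- Re s) = real m powr (- Re s0) * real m powr (- x)"
      "real n powr (- Re u) = real n powr (- Re u0) * real n powr (- y)"
      unfolding x_def y_def by (simp_all add: powr_add[symmetric])
    then have "norm (f p) = norm (c m n * npow m s0 * npow n u0) * w p"
      unfolding p f_def w_def by (simp add: norm_mult norm_npow mult_ac)
    also have "\<dots> \<le> B * w p"
      unfolding p w_def using p by (intro mult_right_mono bound) auto
    finally show ?thesis .
  qed
  have leading: "(1, 1) \<in> ?P"
    using M N by auto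
  have "sum w ?P = (\<Sum>m\<in>{1..M}. real m powr (- x)) * (\<Sum>n\<in>{1..N}. real n powr (- y))"
    by (simp add: w_def sum.cartesian_product sum_product)
  also have "\<dots> \<le> (1 + 2 powr (2 - x)) * (1 + 2 powr (2 - y))"
    using x y unfolding x_def y_def
    by (intro mult_mono sum_real_powr_neg_le sum_nonneg) auto
  finally have w_sum: "sum w ?P \<le> (1 + 2 powr (2 - x)) * (1 + 2 powr (2 - y))" .
  have "dd_partial c s u (M, N) = sum f ?P"
    by (simp add: dd_partial_def f_def sum.cartesian_product)
  also have "\<dots> = f (1, 1) + sum f (?P - {(1, 1)})"
    using leading by (intro sum.remove) auto
  finally have "norm (dd_partial c s u (M, N) - c 1 1) = norm (sum f (?P - {(1, 1)}))"
    by (simp add: f_def npow_def)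
  also have "\<dots> \<le> (\<Sum>p\<in>?P - {(1, 1)}. norm (f p))"
    by (rule norm_sum)
  also have "\<dots> \<le> (\<Sum>p\<in>?P - {(1, 1)}. B * w p)"
    by (rule sum_mono) (use f_le in auto)
  also have "\<dots> = B * (sum w ?P - 1)"
    using leading by (simp add: sum_distrib_left[symmetric] sum_diff1 w_def)
  also have "\<dots> \<le> B * ((1 + 2 powr (2 - x)) * (1 + 2 powr (2 - y)) - 1)"
    using B w_sum by (intro mult_left_mono) auto
  finally show ?thesis
    unfolding x_def y_def .
qed

lemma tendsto_dd_partial_kappa:
  assumes "dirichlet_series_kernel \<rho> a" "s \<in> halfplane \<rho>" "u \<in> halfplane \<rho>"
  shows "(dd_partial a s (cnj u) \<longlongrightarrow> kappa a s u) (sequentially \<times>\<^sub>F sequentially)"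
proof -
  have "cnj u \<in> halfplane \<rho>"
    using assms(3) by (simp add: halfplane_def)
  then have "regularly_convergent_at a s (cnj u)"
    using assms(1,2) unfolding dirichlet_series_kernel_def by blast
  then obtain L where "(dd_partial a s (cnj u) \<longlongrightarrow> L) (sequentially \<times>\<^sub>F sequentially)"
    unfolding regularly_convergent_at_def by blast
  then show ?thesis
    unfolding kappa_def by (simp add: tendsto_Lim prod_filter_eq_bot)
qed

lemma norm_kappa_minus_leading_le:
  assumes kernel: "dirichlet_series_kernel \<rho> a"
  obtains B where "\<And>s u. Re s \<ge> \<rho> + 3 \<Longrightarrow> Re u \<ge> \<rho> + 3 \<Longrightarrow>
    norm (kappa a s u - a 1 1) \<le> B * ((1 + 2 powr (\<rho> + 3 - Re s)) * (1 + 2 powr (\<rho> + 3 - Re u)) - 1)"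
proof -
  define r where "r = complex_of_real (\<rho> + 1)"
  have "r \<in> halfplane \<rho>"
    by (simp add: r_def halfplane_def)
  then have "regularly_convergent_at a r r"
    using kernel unfolding dirichlet_series_kernel_def by blast
  then obtain B where bound: "\<And>m n. m \<ge> 1 \<Longrightarrow> n \<ge> 1 \<Longrightarrow> norm (a m n * npow m r * npow n r) \<le> B"
    using regularly_convergent_at_bounded_terms by blast
  have "norm (kappa a s u - a 1 1) \<le> B * ((1 + 2 powr (\<rho> + 3 - Re s)) * (1 + 2 powr (\<rho> + 3 - Re u)) - 1)"
    if s: "Re s \<ge> \<rho> + 3" and u: "Re u \<ge> \<rho> + 3" for s u
  proof (rule tendsto_upperbound)
    show "((\<lambda>p. norm (dd_partial a s (cnj u) p - a 1 1)) \<longlongrightarrow> norm (kappa a s u - a 1 1))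
        (sequentially \<times>\<^sub>F sequentially)"
      using s u by (intro tendsto_intros tendsto_dd_partial_kappa[OF kernel]) (auto simp: halfplane_def)
    have "norm (dd_partial a s (cnj u) (M, N) - a 1 1)
        \<le> B * ((1 + 2 powr (\<rho> + 3 - Re s)) * (1 + 2 powr (\<rho> + 3 - Re u)) - 1)"
      if "M \<ge> 1" "N \<ge> 1" for M N
    proof -
      have "norm (dd_partial a s (cnj u) (M, N) - a 1 1)
          \<le> B * ((1 + 2 powr (2 - (Re s - Re r))) * (1 + 2 powr (2 - (Re (cnj u) - Re r))) - 1)"
        by (rule norm_dd_partial_minus_leading_le[OF bound]) (use s u that in \<open>simp_all add: r_def\<close>)
      also have "2 - (Re s - Re r) = \<rho> + 3 - Re s"
        by (simp add: r_def)
      also have "2 - (Re (cnj u) - Re r) = \<rho> + 3 - Re u"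
        by (simp add: r_def)
      finally show ?thesis .
    qed
    then show "eventually (\<lambda>p. norm (dd_partial a s (cnj u) p - a 1 1)
        \<le> B * ((1 + 2 powr (\<rho> + 3 - Re s)) * (1 + 2 powr (\<rho> + 3 - Re u)) - 1))
        (sequentially \<times>\<^sub>F sequentially)"
      unfolding eventually_prod_sequentially by (intro exI[of _ 1]) auto
  qed (simp add: prod_filter_eq_bot)
  then show ?thesis
    using that by blast
qed

lemma phiA_dilation:
  "t \<noteq> 0 \<Longrightarrow> phiA \<rho> t 0 (1 / t) z = of_real (t\<^sup>2) * (z - of_real \<rho>) + of_real \<rho>"
  by (simp add: phiA_def field_simps power2_eq_square)

lemma phiA_dilation_in_Aut_L: "t \<noteq> 0 \<Longrightarrow> phiA \<rho> t 0 (1 / t) \<in> Aut_L \<rho>"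
  unfolding Aut_L_def by (intro CollectI exI[of _ t] exI[of _ 0] exI[of _ "1 / t"]) simp

lemma kappa_dilation_tendsto_leading:
  assumes kernel: "dirichlet_series_kernel \<rho> a"
    and s: "s \<in> halfplane \<rho>" and u: "u \<in> halfplane \<rho>"
  shows "((\<lambda>t. kappa a (phiA \<rho> t 0 (1 / t) s) (phiA \<rho> t 0 (1 / t) u)) \<longlongrightarrow> a 1 1) at_top"
proof -
  define \<alpha> where "\<alpha> = Re s - \<rho>"
  define \<beta> where "\<beta> = Re u - \<rho>"
  have "\<alpha> > 0" "\<beta> > 0"
    using s u by (simp_all add: \<alpha>_def \<beta>_def halfplane_def)
  obtain B where B: "\<And>s u. Re s \<ge> \<rho> + 3 \<Longrightarrow> Re u \<ge> \<rho> + 3 \<Longrightarrow>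
    norm (kappa a s u - a 1 1) \<le> B * ((1 + 2 powr (\<rho> + 3 - Re s)) * (1 + 2 powr (\<rho> + 3 - Re u)) - 1)"
    using norm_kappa_minus_leading_le[OF kernel] by blast
  have Re_dilation: "Re (phiA \<rho> t 0 (1 / t) z) = \<rho> + t\<^sup>2 * (Re z - \<rho>)" if "t \<noteq> 0" for t z
    using that by (simp add: phiA_dilation)
  have "eventually (\<lambda>t::real. t > 0) at_top"
    by (rule eventually_gt_at_top)
  moreover have "eventually (\<lambda>t. t\<^sup>2 * \<alpha> \<ge> 3) at_top"
    using \<open>\<alpha> > 0\<close> by real_asymp
  moreover have "eventually (\<lambda>t. t\<^sup>2 * \<beta> \<ge> 3) at_top"
    using \<open>\<beta> > 0\<close> by real_asymp
  ultimately have "eventually (\<lambda>t. norm (kappa a (phiA \<rho> t 0 (1 / t) s) (phiA \<rho> t 0 (1 / t) u) - a 1 1)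
      \<le> B * ((1 + 2 powr (3 - t\<^sup>2 * \<alpha>)) * (1 + 2 powr (3 - t\<^sup>2 * \<beta>)) - 1)) at_top"
  proof eventually_elim
    case (elim t)
    have "Re (phiA \<rho> t 0 (1 / t) s) = \<rho> + t\<^sup>2 * \<alpha>" "Re (phiA \<rho> t 0 (1 / t) u) = \<rho> + t\<^sup>2 * \<beta>"
      using elim by (simp_all add: Re_dilation \<alpha>_def \<beta>_def)
    then show ?case
      using elim B[of "phiA \<rho> t 0 (1 / t) s" "phiA \<rho> t 0 (1 / t) u"] by simp
  qed
  moreover have "((\<lambda>t. B * ((1 + 2 powr (3 - t\<^sup>2 * \<alpha>)) * (1 + 2 powr (3 - t\<^sup>2 * \<beta>)) - 1)) \<longlongrightarrow> 0) at_top"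
  proof -
    have "((\<lambda>t. 2 powr (3 - t\<^sup>2 * \<alpha>)) \<longlongrightarrow> 0) at_top" "((\<lambda>t. 2 powr (3 - t\<^sup>2 * \<beta>)) \<longlongrightarrow> 0) at_top"
      using \<open>\<alpha> > 0\<close> \<open>\<beta> > 0\<close> by (real_asymp, real_asymp)
    then have "((\<lambda>t. B * ((1 + 2 powr (3 - t\<^sup>2 * \<alpha>)) * (1 + 2 powr (3 - t\<^sup>2 * \<beta>)) - 1))
        \<longlongrightarrow> B * ((1 + 0) * (1 + 0) - 1)) at_top"
      by (intro tendsto_intros)
    then show ?thesis
      by simp
  qed
  ultimately show ?thesis
    by (rule LIM_zero_cancel[OF Lim_null_comparison])
qed

theorem corollary4p6:
  fixes \<rho> :: real and a :: "nat \<Rightarrow> nat \<Rightarrow> complex"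
  assumes "dirichlet_series_kernel \<rho> a"
    and "\<exists>s1\<in>halfplane \<rho>. \<exists>u1\<in>halfplane \<rho>. \<exists>s2\<in>halfplane \<rho>. \<exists>u2\<in>halfplane \<rho>.
           kappa a s1 u1 \<noteq> kappa a s2 u2"
  shows "\<not> invariant_kernel (Aut_L \<rho>) (halfplane \<rho>) (kappa a)"
proof
  assume "invariant_kernel (Aut_L \<rho>) (halfplane \<rho>) (kappa a)"
  then have invariant: "kappa a (g s) (g u) = kappa a s u"
    if "g \<in> Aut_L \<rho>" "s \<in> halfplane \<rho>" "u \<in> halfplane \<rho>" for g s u
    using that unfolding invariant_kernel_def by blast
  have "kappa a s u = a 1 1" if s: "s \<in> halfplane \<rho>" and u: "u \<in> halfplane \<rho>" for s u
  proof -
    have "eventually (\<lambda>t::real. t > 0) at_top"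
      by (rule eventually_gt_at_top)
    then have "eventually (\<lambda>t. kappa a (phiA \<rho> t 0 (1 / t) s) (phiA \<rho> t 0 (1 / t) u) = kappa a s u) at_top"
      by eventually_elim (simp add: invariant phiA_dilation_in_Aut_L s u)
    with kappa_dilation_tendsto_leading[OF assms(1) s u]
    have "((\<lambda>t::real. kappa a s u) \<longlongrightarrow> a 1 1) at_top"
      by (rule Lim_transform_eventually)
    then show ?thesis
      by (simp add: tendsto_const_iff)
  qed
  with assms(2) show False
    by metis
qed

end
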